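(* Let $G=(V,E)$ be a finite, simple, connected graph, and let $\chi(G)$ denote its chromatic number. Then \[\frac{\chi(G)(\chi(G)-1)}{2} + |V| - \chi(G) = |E|\] holds if and only if $G$ is of type A or of type B.
   Context: All graphs are finite and simple (no loops, no multiple edges). Say that a graph $G$ is obtained from a graph $H$ by attaching trees if $G$ can be built from $H$ by a finite sequence (possibly empty) of steps, each of which adds one new vertex joined by an edge to exactly one already existing vertex (equivalently, $H$ is a subgraph of $G$ and the graph obtained from $G$ by deleting the edges of $H$ is a forest each of whose components contains exactly one vertex of $H$). A connected graph is of type A if it is obtained by attaching trees to a complete graph $K_n$ for some $n\ge 1$; it is of type B if it is obtained by attaching trees to an odd cycle $C_{2m+1}$ for some $m\ge 1$. The complete graph or odd cycle is called the underlying graph. *)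

theory Defs
  imports Main
begin

definition simple_graph :: "'a set \<Rightarrow> 'a set set \<Rightarrow> bool" where
  "simple_graph V E \<longleftrightarrow> finite V \<and>
     (\<forall>e\<in>E. \<exists>u v. u \<in> V \<and> v \<in> V \<and> u \<noteq> v \<and> e = {u, v})"

definition adj :: "'a set set \<Rightarrow> 'a \<Rightarrow> 'a \<Rightarrow> bool" where
  "adj E u v \<longleftrightarrow> {u, v} \<in> E"

definition connected_graph :: "'a set \<Rightarrow> 'a set set \<Rightarrow> bool" where
  "connected_graph V E \<longleftrightarrow> V \<noteq> {} \<and> (\<forall>u\<in>V. \<forall>v\<in>V. (adj E)\<^sup>*\<^sup>* u v)"

definition proper_colouring :: "'a set \<Rightarrow> 'a set set \<Rightarrow> nat \<Rightarrow> ('a \<Rightarrow> nat) \<Rightarrow> bool" where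
  "proper_colouring V E k f \<longleftrightarrow> (\<forall>v\<in>V. f v < k) \<and> (\<forall>u v. {u, v} \<in> E \<longrightarrow> f u \<noteq> f v)"

definition chromatic_number :: "'a set \<Rightarrow> 'a set set \<Rightarrow> nat" where
  "chromatic_number V E = (LEAST k. \<exists>f. proper_colouring V E k f)"

inductive attach_trees :: "'a set \<Rightarrow> 'a set set \<Rightarrow> 'a set \<Rightarrow> 'a set set \<Rightarrow> bool" where
  refl: "attach_trees VH EH VH EH"
| step: "attach_trees VH EH V E \<Longrightarrow> u \<in> V \<Longrightarrow> w \<notin> V \<Longrightarrow>
         attach_trees VH EH (insert w V) (insert {u, w} E)"

definition complete_edges :: "'a set \<Rightarrow> 'a set set" where
  "complete_edges K = {{u, v} | u v. u \<in> K \<and> v \<in> K \<and> u \<noteq> v}"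

definition cycle_vertices :: "nat \<Rightarrow> (nat \<Rightarrow> 'a) \<Rightarrow> 'a set" where
  "cycle_vertices n c = c ` {..<n}"

definition cycle_edges :: "nat \<Rightarrow> (nat \<Rightarrow> 'a) \<Rightarrow> 'a set set" where
  "cycle_edges n c = {{c i, c (Suc i mod n)} | i. i < n}"

definition type_A :: "'a set \<Rightarrow> 'a set set \<Rightarrow> bool" where
  "type_A V E \<longleftrightarrow> connected_graph V E \<and>
     (\<exists>K. finite K \<and> K \<noteq> {} \<and> attach_trees K (complete_edges K) V E)"

definition type_B :: "'a set \<Rightarrow> 'a set set \<Rightarrow> bool" where
  "type_B V E \<longleftrightarrow> connected_graph V E \<and>
     (\<exists>m c. m \<ge> 1 \<and> inj_on c {..<2*m+1} \<and>
        attach_trees (cycle_vertices (2*m+1) c) (cycle_edges (2*m+1) c) V E)"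

end

theory Submission
  imports Defs
begin

text \<open>Let k be the chromatic number of G. Some induced subgraph G[W] satisfies
  |E(G[W])| - |W| \<ge> k(k-1)/2 - k, with equality only if G[W] is a complete graph or an odd cycle:
  for k \<le> 2 take a clique on k vertices, for k = 3 a shortest odd closed walk, which is an odd cycle,
  and for k \<ge> 4 a vertex-minimal subgraph that is not (k-1)-colourable; it has at least k vertices
  and minimum degree at least k - 1. Since G is connected, at least one edge leaves W for every vertex
  outside W, with equality exactly when G arises from G[W] by attaching trees. Adding up gives
  |E| - |V| \<ge> k(k-1)/2 - k, with equality exactly for the graphs of type A or B; conversely, attaching
  a tree to a graph with at least one edge changes neither |E| - |V| nor the chromatic number.\<close>

lemma simple_graph_finite_vertices: "simple_graph V E \<Longrightarrow> finite V"
  by (simp add: simple_graph_def)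

lemma simple_graph_edgeE:
  assumes "simple_graph V E" "e \<in> E"
  obtains u v where "u \<in> V" "v \<in> V" "u \<noteq> v" "e = {u, v}"
  using assms by (auto simp: simple_graph_def)

lemma simple_graph_edgeD:
  assumes "simple_graph V E" "{u, v} \<in> E"
  shows "u \<in> V" "v \<in> V" "u \<noteq> v"
  using assms by (auto simp: simple_graph_def doubleton_eq_iff)

lemma simple_graph_edge_subset: "simple_graph V E \<Longrightarrow> e \<in> E \<Longrightarrow> e \<subseteq> V"
  by (auto simp: simple_graph_def)

lemma simple_graph_finite_edges: "simple_graph V E \<Longrightarrow> finite E"
  by (meson Pow_iff finite_Pow_iff finite_subset simple_graph_edge_subset
      simple_graph_finite_vertices subsetI)

lemma simple_graph_complete_edges: "finite K \<Longrightarrow> simple_graph K (complete_edges K)"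
  by (auto simp: simple_graph_def complete_edges_def)

lemma finite_complete_edges: "finite K \<Longrightarrow> finite (complete_edges K)"
  using simple_graph_complete_edges simple_graph_finite_edges by blast

lemma card_complete_edges: "finite K \<Longrightarrow> card (complete_edges K) = card K * (card K - 1) div 2"
proof -
  assume "finite K"
  have "complete_edges K = {B. B \<subseteq> K \<and> card B = 2}"
    by (auto simp: complete_edges_def card_2_iff)
  with \<open>finite K\<close> show ?thesis
    by (simp add: n_subsets choose_two)
qed

lemma connected_graph_crossing_edge:
  assumes "simple_graph V E" "connected_graph V E" "S \<subseteq> V" "S \<noteq> {}" "S \<noteq> V"
  obtains a b where "a \<in> S" "b \<in> V - S" "{a, b} \<in> E"
proof -
  obtain u v where u: "u \<in> S" and v: "v \<in> V" "v \<notin> S"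
    using assms(3-5) by blast
  have "(adj E)\<^sup>*\<^sup>* u v"
    using assms(2,3) u v unfolding connected_graph_def by blast
  then have "\<exists>a\<in>S. \<exists>b\<in>V - S. {a, b} \<in> E"
    using v(2)
  proof (induction rule: rtranclp_induct)
    case (step y z)
    then have "{y, z} \<in> E" by (simp add: adj_def)
    with step assms(1) show ?case
      by (cases "y \<in> S") (auto dest: simple_graph_edgeD)
  qed (use u in blast)
  with that show ?thesis by blast
qed

section \<open>Attaching trees\<close>

definition edges_within :: "'a set set \<Rightarrow> 'a set \<Rightarrow> 'a set set" where
  "edges_within E W = {e \<in> E. e \<subseteq> W}"

lemma attach_trees_trans:
  assumes "attach_trees A B C D" "attach_trees C D X Y"
  shows "attach_trees A B X Y"
  using assms(2,1) by induction (auto intro: attach_trees.step)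

lemma attach_trees_subset: "attach_trees VH EH V E \<Longrightarrow> VH \<subseteq> V \<and> EH \<subseteq> E"
  by (induction rule: attach_trees.induct) auto

lemma attach_trees_edges_subset:
  "attach_trees VH EH V E \<Longrightarrow> \<forall>e\<in>EH. e \<subseteq> VH \<Longrightarrow> \<forall>e\<in>E. e \<subseteq> V"
  by (induction rule: attach_trees.induct) auto

lemma attach_trees_card:
  assumes "attach_trees VH EH V E" "\<forall>e\<in>EH. e \<subseteq> VH" "finite V" "finite E"
  shows "card V + card EH = card E + card VH"
  using assms
proof (induction rule: attach_trees.induct)
  case (step VH EH V E u w)
  have "{u, w} \<notin> E"
    using attach_trees_edges_subset[OF step.hyps(1) step.prems(1)] step.hyps(3) by blast
  moreover have "card V + card EH = card E + card VH"
    using step.IH step.prems by simp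
  ultimately show ?case
    using step.hyps(3) step.prems(2,3) by simp
qed simp

lemma card_edges_outside:
  assumes "simple_graph V E" "connected_graph V E" "W \<subseteq> V" "W \<noteq> {}"
  shows "card (V - W) \<le> card (E - edges_within E W) \<and>
    (card (E - edges_within E W) = card (V - W) \<longrightarrow> attach_trees W (edges_within E W) V E)"
  using assms(3,4)
proof (induction "card (V - W)" arbitrary: W rule: less_induct)
  case less
  have fin: "finite V" "finite E"
    using assms(1) simple_graph_finite_vertices simple_graph_finite_edges by auto
  show ?case
  proof (cases "W = V")
    case True
    then have "edges_within E W = E"
      using assms(1) simple_graph_edge_subset by (auto simp: edges_within_def)
    with True show ?thesis by (simp add: attach_trees.refl)
  next
    case False
    then obtain a b where ab: "a \<in> W" "b \<in> V - W" "{a, b} \<in> E"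
      using connected_graph_crossing_edge[OF assms(1,2) less.prems] by blast
    define W' where "W' = insert b W"
    have card_W': "card (V - W) = Suc (card (V - W'))"
      using card_Suc_Diff1[of "V - W" b] ab(2) fin(1) by (simp add: W'_def Diff_insert2[symmetric])
    then have IH: "card (V - W') \<le> card (E - edges_within E W') \<and>
        (card (E - edges_within E W') = card (V - W') \<longrightarrow> attach_trees W' (edges_within E W') V E)"
      using less.hyps[of W'] less.prems ab by (auto simp: W'_def)
    have sub: "insert {a, b} (E - edges_within E W') \<subseteq> E - edges_within E W"
      and new: "{a, b} \<notin> E - edges_within E W'"
      using ab by (auto simp: edges_within_def W'_def)
    then have card_out: "Suc (card (E - edges_within E W')) \<le> card (E - edges_within E W)"
      using card_mono[OF _ sub] fin(2) by simp
    show ?thesis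
    proof (intro conjI impI)
      show "card (V - W) \<le> card (E - edges_within E W)"
        using IH card_W' card_out by linarith
    next
      assume tight: "card (E - edges_within E W) = card (V - W)"
      then have "insert {a, b} (E - edges_within E W') = E - edges_within E W"
        using IH card_W' card_out new fin(2) by (intro card_subset_eq[OF _ sub]) auto
      then have "edges_within E W' = insert {a, b} (edges_within E W)"
        using ab by (auto simp: edges_within_def W'_def)
      moreover have "attach_trees W (edges_within E W) W' (insert {a, b} (edges_within E W))"
        unfolding W'_def using ab by (intro attach_trees.step attach_trees.refl) auto
      ultimately show "attach_trees W (edges_within E W) V E"
        using IH tight card_W' card_out attach_trees_trans by fastforce
    qed
  qed
qed

definition colourable :: "'a set set \<Rightarrow> 'a set \<Rightarrow> nat \<Rightarrow> bool" where
  "colourable E W k \<longleftrightarrow>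
     (\<exists>f. (\<forall>v\<in>W. f v < k) \<and> (\<forall>u\<in>W. \<forall>v\<in>W. {u, v} \<in> E \<longrightarrow> f u \<noteq> f v))"

lemma colourable_iff_proper_colouring:
  assumes "simple_graph V E"
  shows "colourable E V k \<longleftrightarrow> (\<exists>f. proper_colouring V E k f)"
  using simple_graph_edgeD[OF assms] by (auto simp: colourable_def proper_colouring_def)

lemma colourable_mono: "colourable E W k \<Longrightarrow> k \<le> k' \<Longrightarrow> colourable E W k'"
  unfolding colourable_def by (metis order.strict_trans2)

lemma colourable_card:
  assumes "simple_graph V E" "W \<subseteq> V" "card W \<le> k"
  shows "colourable E W k"
proof -
  have "finite W"
    using assms(1,2) finite_subset simple_graph_finite_vertices by blast
  then obtain h where h: "bij_betw h W {0..<card W}"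
    using ex_bij_betw_finite_nat by blast
  then have "\<forall>v\<in>W. h v < k"
    using assms(3) bij_betwE by fastforce
  moreover have "\<forall>u\<in>W. \<forall>v\<in>W. {u, v} \<in> E \<longrightarrow> h u \<noteq> h v"
    using h simple_graph_edgeD(3)[OF assms(1)] unfolding bij_betw_def inj_on_def by blast
  ultimately show ?thesis
    unfolding colourable_def by blast
qed

lemma chromatic_number_le_iff:
  assumes "simple_graph V E"
  shows "chromatic_number V E \<le> k \<longleftrightarrow> colourable E V k"
proof
  have "colourable E V (card V)"
    using colourable_card[OF assms] by blast
  then have "\<exists>f. proper_colouring V E (chromatic_number V E) f"
    unfolding chromatic_number_def colourable_iff_proper_colouring[OF assms] by (rule LeastI)
  then show "chromatic_number V E \<le> k \<Longrightarrow> colourable E V k"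
    using colourable_iff_proper_colouring[OF assms] colourable_mono by blast
next
  show "colourable E V k \<Longrightarrow> chromatic_number V E \<le> k"
    unfolding chromatic_number_def colourable_iff_proper_colouring[OF assms] by (rule Least_le)
qed

lemma chromatic_number_eqI:
  assumes "simple_graph V E" "colourable E V k" "\<not> colourable E V (k - 1)"
  shows "chromatic_number V E = k"
proof -
  have "chromatic_number V E \<le> k" "\<not> chromatic_number V E \<le> k - 1"
    using assms chromatic_number_le_iff[OF assms(1)] by auto
  then show ?thesis by linarith
qed

lemma clique_card_le_colours:
  assumes "colourable E V k" "K \<subseteq> V" "complete_edges K \<subseteq> E" "finite K"
  shows "card K \<le> k"
proof -
  obtain f where f: "\<forall>v\<in>V. f v < k" "\<forall>u\<in>V. \<forall>v\<in>V. {u, v} \<in> E \<longrightarrow> f u \<noteq> f v"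
    using assms(1) unfolding colourable_def by blast
  have "inj_on f K"
  proof (rule inj_onI, rule ccontr)
    fix x y assume xy: "x \<in> K" "y \<in> K" "f x = f y" "x \<noteq> y"
    then have "{x, y} \<in> E"
      using assms(3) unfolding complete_edges_def by blast
    with xy f(2) assms(2) show False by blast
  qed
  then have "card K = card (f ` K)"
    by (simp add: card_image)
  also have "\<dots> \<le> card {..<k}"
    using f(1) assms(2) by (intro card_mono) auto
  finally show ?thesis by simp
qed

lemma attach_trees_colourable:
  assumes "attach_trees VH EH V E" "\<forall>e\<in>EH. e \<subseteq> VH" "2 \<le> k" "colourable EH VH k"
  shows "colourable E V k"
  using assms
proof (induction rule: attach_trees.induct)
  case (step VH EH V E u w)
  then obtain g where g: "\<forall>v\<in>V. g v < k" "\<forall>x\<in>V. \<forall>y\<in>V. {x, y} \<in> E \<longrightarrow> g x \<noteq> g y"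
    unfolding colourable_def by blast
  have inside: "\<forall>e\<in>E. e \<subseteq> V"
    using attach_trees_edges_subset step by blast
  define g' where "g' = g(w := if g u = 0 then 1 else 0)"
  have "\<forall>v\<in>insert w V. g' v < k"
    using g(1) step.prems(2) by (simp add: g'_def)
  moreover have "g' x \<noteq> g' y" if "x \<in> insert w V" "y \<in> insert w V" "{x, y} \<in> insert {u, w} E" for x y
  proof (cases "{x, y} = {u, w}")
    case True
    with step.hyps show ?thesis
      by (auto simp: g'_def doubleton_eq_iff)
  next
    case False
    then have "{x, y} \<in> E"
      using that(3) by simp
    moreover from this have "x \<in> V" "y \<in> V"
      using inside by auto
    ultimately show ?thesis
      using g(2) step.hyps(3) by (auto simp: g'_def)
  qed
  ultimately show ?case
    unfolding colourable_def by blast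
qed simp

section \<open>Vertex-minimal non-colourable subgraphs\<close>

lemma colourable_extend_low_degree:
  assumes "simple_graph V E" "finite W" "colourable E (W - {u}) k"
    and "card {v \<in> W. {u, v} \<in> E} < k"
  shows "colourable E W k"
proof -
  define N where "N = {v \<in> W. {u, v} \<in> E}"
  obtain g where g: "\<forall>v\<in>W - {u}. g v < k"
    "\<forall>x\<in>W - {u}. \<forall>y\<in>W - {u}. {x, y} \<in> E \<longrightarrow> g x \<noteq> g y"
    using assms(3) unfolding colourable_def by blast
  have "finite N"
    using assms(2) by (simp add: N_def)
  then have "card (g ` N) \<le> card N"
    by (rule card_image_le)
  then have "card (g ` N) < card {..<k}"
    using assms(4) by (simp add: N_def)
  then have "\<not> {..<k} \<subseteq> g ` N"
    using card_mono \<open>finite N\<close> by (metis finite_imageI not_le)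
  then obtain c where c: "c < k" "c \<notin> g ` N"
    by blast
  define f where "f = g(u := c)"
  have "f x \<noteq> f y" if "x \<in> W" "y \<in> W" "{x, y} \<in> E" for x y
  proof -
    have "x \<noteq> y"
      using simple_graph_edgeD(3)[OF assms(1) that(3)] .
    consider "x = u" | "y = u" | "x \<noteq> u" "y \<noteq> u"
      by blast
    then show ?thesis
    proof cases
      case 1
      with that have "y \<in> N"
        by (simp add: N_def)
      with 1 \<open>x \<noteq> y\<close> c(2) show ?thesis
        by (auto simp: f_def)
    next
      case 2
      with that have "x \<in> N"
        by (simp add: N_def insert_commute)
      with 2 \<open>x \<noteq> y\<close> c(2) show ?thesis
        by (auto simp: f_def)
    next
      case 3
      with that g(2) show ?thesis
        by (simp add: f_def)
    qed
  qed
  moreover have "\<forall>v\<in>W. f v < k"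
    using g(1) c(1) by (simp add: f_def)
  ultimately show ?thesis
    unfolding colourable_def by blast
qed

lemma sum_card_neighbours_le:
  assumes "simple_graph V E" "finite W"
  shows "(\<Sum>u\<in>W. card {v \<in> W. {u, v} \<in> E}) \<le> 2 * card (edges_within E W)"
proof -
  define ends where "ends e = {p \<in> e \<times> e. {fst p, snd p} = e}" for e :: "'a set"
  have fin: "finite (edges_within E W)"
    using simple_graph_finite_edges[OF assms(1)] by (simp add: edges_within_def)
  have "finite (ends e)" "card (ends e) \<le> 2" if "e \<in> edges_within E W" for e
  proof -
    have "e \<in> E"
      using that by (simp add: edges_within_def)
    then obtain a b where "e = {a, b}"
      using simple_graph_edgeE[OF assms(1)] by metis
    then have "ends e \<subseteq> {(a, b), (b, a)}"
      by (auto simp: ends_def doubleton_eq_iff)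
    moreover have "card {(a, b), (b, a)} \<le> 2"
      by (cases "a = b") auto
    ultimately show "finite (ends e)" "card (ends e) \<le> 2"
      using card_mono[of "{(a, b), (b, a)}" "ends e"] by (auto intro: finite_subset)
  qed
  note ends = this
  have "(\<Sum>u\<in>W. card {v \<in> W. {u, v} \<in> E}) = card (SIGMA u:W. {v \<in> W. {u, v} \<in> E})"
    using assms(2) by simp
  also have "\<dots> \<le> card (\<Union>e\<in>edges_within E W. ends e)"
    using fin ends(1) by (intro card_mono) (auto simp: edges_within_def ends_def)
  also have "\<dots> \<le> (\<Sum>e\<in>edges_within E W. card (ends e))"
    using fin by (rule card_UN_le)
  also have "\<dots> \<le> (\<Sum>e\<in>edges_within E W. 2)"
    using ends(2) by (rule sum_mono)
  finally show ?thesis by simp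
qed

lemma minimal_non_colourable_subgraph:
  assumes "simple_graph V E" "\<not> colourable E V j"
  obtains W where "W \<subseteq> V" "j + 1 \<le> card W" "j * card W \<le> 2 * card (edges_within E W)"
proof -
  obtain W where W: "W \<subseteq> V" "\<not> colourable E W j"
    and min: "\<And>Y. Y \<subseteq> V \<Longrightarrow> \<not> colourable E Y j \<Longrightarrow> card W \<le> card Y"
    using ex_has_least_nat[of "\<lambda>W. W \<subseteq> V \<and> \<not> colourable E W j" V card] assms(2) by blast
  have fin: "finite W"
    using W(1) assms(1) finite_subset simple_graph_finite_vertices by blast
  have "\<not> card W \<le> j"
    using colourable_card[OF assms(1) W(1)] W(2) by blast
  then have "j + 1 \<le> card W"
    by simp
  moreover have "j \<le> card {v \<in> W. {u, v} \<in> E}" if "u \<in> W" for u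
  proof (rule ccontr)
    have "colourable E (W - {u}) j"
      using min[of "W - {u}"] W(1) card_Diff1_less[OF fin that] by fastforce
    then show "\<not> j \<le> card {v \<in> W. {u, v} \<in> E} \<Longrightarrow> False"
      using colourable_extend_low_degree[OF assms(1) fin] W(2) by auto
  qed
  then have "j * card W \<le> (\<Sum>u\<in>W. card {v \<in> W. {u, v} \<in> E})"
    using sum_mono[of W "\<lambda>_. j"] by (simp add: mult.commute)
  then have "j * card W \<le> 2 * card (edges_within E W)"
    using sum_card_neighbours_le[OF assms(1) fin] by linarith
  ultimately show ?thesis
    using that W(1) by blast
qed

lemma edges_within_subset_complete_edges:
  "simple_graph V E \<Longrightarrow> edges_within E W \<subseteq> complete_edges W"
  by (auto simp: edges_within_def complete_edges_def elim!: simple_graph_edgeE)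

lemma edges_within_clique:
  assumes "simple_graph V E" "complete_edges K \<subseteq> E"
  shows "edges_within E K = complete_edges K"
proof
  show "edges_within E K \<subseteq> complete_edges K"
    by (rule edges_within_subset_complete_edges[OF assms(1)])
  show "complete_edges K \<subseteq> edges_within E K"
    using assms(2) by (auto simp: edges_within_def complete_edges_def)
qed

section \<open>Odd closed walks and odd cycles\<close>

lemma symp_relpowp: "symp R \<Longrightarrow> (R ^^ n) x y \<Longrightarrow> (R ^^ n) y x"
proof (induction n arbitrary: y)
  case (Suc n)
  then obtain z where "(R ^^ n) x z" "R z y"
    by (meson relpowp_Suc_E)
  with Suc show ?case
    by (meson relpowp_Suc_I2 sympD)
qed simp

lemma relpowp_walk_segment:
  assumes "\<forall>k<n. R (f k) (f (Suc k))" "i \<le> j" "j \<le> n"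
  shows "(R ^^ (j - i)) (f i) (f j)"
proof -
  have "\<forall>k<j - i. R (f (i + k)) (f (Suc (i + k)))"
    using assms by simp
  then show ?thesis
    unfolding relpowp_fun_conv using assms(2) by (intro exI[of _ "\<lambda>k. f (i + k)"]) auto
qed

lemma symp_adj: "symp (adj E)"
  by (simp add: symp_def adj_def insert_commute)

text \<open>Colour each vertex by the parity of its distance from a fixed root.\<close>
lemma colourable_2_if_no_odd_closed_walk:
  assumes "connected_graph V E" "\<And>n v. odd n \<Longrightarrow> \<not> (adj E ^^ n) v v"
  shows "colourable E V 2"
proof -
  obtain r where r: "r \<in> V"
    using assms(1) unfolding connected_graph_def by blast
  define dist where "dist v = (LEAST n. (adj E ^^ n) r v)" for v
  have dist: "(adj E ^^ dist v) r v" if "v \<in> V" for v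
  proof -
    have "\<exists>n. (adj E ^^ n) r v"
      using assms(1) r that unfolding connected_graph_def rtranclp_power by blast
    then show ?thesis
      unfolding dist_def by (rule LeastI_ex)
  qed
  have "dist u mod 2 \<noteq> dist v mod 2" if "u \<in> V" "v \<in> V" "{u, v} \<in> E" for u v
  proof
    assume same: "dist u mod 2 = dist v mod 2"
    have "(adj E ^^ Suc (dist u)) r v"
      using dist[OF that(1)] that(3) by (auto simp: adj_def)
    moreover have "(adj E ^^ dist v) v r"
      using symp_relpowp[OF symp_adj dist[OF that(2)]] .
    ultimately have "(adj E ^^ (Suc (dist u) + dist v)) r r"
      by (rule relpowp_trans)
    moreover have "odd (Suc (dist u) + dist v)"
      using same by presburger
    ultimately show False
      using assms(2) by blast
  qed
  then show ?thesis
    unfolding colourable_def by (intro exI[of _ "\<lambda>v. dist v mod 2"]) auto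
qed

text \<open>A shortest odd closed walk is an odd cycle: a repeated vertex would split it into two shorter
  closed walks, one of which is odd.\<close>
lemma odd_cycle_if_odd_closed_walk:
  assumes "simple_graph V E" "odd k" "(adj E ^^ k) u u"
  obtains m c where "1 \<le> m" "inj_on c {..<2 * m + 1}" "cycle_edges (2 * m + 1) c \<subseteq> E"
proof -
  define closed where "closed l \<longleftrightarrow> odd l \<and> (\<exists>w. (adj E ^^ l) w w)" for l
  define n where "n = (LEAST l. closed l)"
  have "closed n" "\<And>l. closed l \<Longrightarrow> n \<le> l"
    using assms(2,3) LeastI[of closed k] Least_le[of closed] by (auto simp: n_def closed_def)
  then obtain v where n: "odd n" "(adj E ^^ n) v v"
    and shortest: "\<And>l w. odd l \<Longrightarrow> (adj E ^^ l) w w \<Longrightarrow> n \<le> l"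
    unfolding closed_def by blast
  then obtain c where c: "c 0 = v" "c n = v" "\<forall>i<n. adj E (c i) (c (Suc i))"
    using relpowp_fun_conv by metis
  have seg: "(adj E ^^ (j - i)) (c i) (c j)" if "i \<le> j" "j \<le> n" for i j
    using relpowp_walk_segment[where R = "adj E" and f = c] c(3) that by blast
  have "n \<noteq> 1"
    using n(2) simple_graph_edgeD(3)[OF assms(1), of v v] by (auto simp: adj_def)
  then have n3: "3 \<le> n"
    using n(1) by presburger
  have "inj_on c {..<n}"
  proof (rule inj_onI, rule ccontr)
    fix i j assume "i \<in> {..<n}" "j \<in> {..<n}" "c i = c j" "i \<noteq> j"
    then obtain i j where ij: "i < j" "j < n" "c i = c j"
      by (metis lessThan_iff linorder_neqE_nat)
    have "(adj E ^^ (n - j)) (c j) (c 0)" "(adj E ^^ i) (c 0) (c i)"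
      using seg[of j n] seg[of 0 i] ij c(1,2) by simp_all
    then have "(adj E ^^ (n - j + i)) (c j) (c i)"
      by (rule relpowp_trans)
    moreover have "(adj E ^^ (j - i)) (c i) (c i)"
      using seg[of i j] ij by simp
    moreover have "odd (j - i) \<or> odd (n - j + i)"
      using n(1) ij by presburger
    ultimately show False
      using shortest ij by fastforce
  qed
  moreover have "cycle_edges n c \<subseteq> E"
  proof
    fix e assume "e \<in> cycle_edges n c"
    then obtain i where i: "i < n" "e = {c i, c (Suc i mod n)}"
      unfolding cycle_edges_def by blast
    moreover have "c (Suc i mod n) = c (Suc i)"
      using c(1,2) i(1) by (cases "Suc i = n") auto
    ultimately show "e \<in> E"
      using c(3) by (simp add: adj_def)
  qed
  moreover have "n = 2 * (n div 2) + 1" "1 \<le> n div 2"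
    using n(1) n3 by presburger+
  ultimately show ?thesis
    using that by metis
qed

lemma card_cycle_edges:
  assumes "inj_on c {..<n}" "3 \<le> n"
  shows "card (cycle_edges n c) = n"
proof -
  define e where "e i = {c i, c (Suc i mod n)}" for i
  have "inj_on e {..<n}"
  proof (rule inj_onI)
    fix i j assume ij: "i \<in> {..<n}" "j \<in> {..<n}" "e i = e j"
    show "i = j"
    proof (cases "c i = c j")
      case True
      with assms(1) ij show ?thesis
        by (auto dest: inj_onD)
    next
      case False
      with ij(3) have "c i = c (Suc j mod n)" "c (Suc i mod n) = c j"
        by (auto simp: e_def doubleton_eq_iff)
      with assms ij(1,2) have "i = Suc j mod n" "Suc i mod n = j"
        by (auto dest: inj_onD)
      then have "Suc (Suc j mod n) mod n = j"
        by simp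
      with assms(2) ij(2) show ?thesis
        by (auto simp: mod_Suc split: if_splits)
    qed
  qed
  moreover have "cycle_edges n c = e ` {..<n}"
    by (auto simp: cycle_edges_def e_def)
  ultimately show ?thesis
    by (simp add: card_image)
qed

lemma cycle_vertices_subset:
  assumes "simple_graph V E" "cycle_edges n c \<subseteq> E"
  shows "cycle_vertices n c \<subseteq> V"
proof
  fix x assume "x \<in> cycle_vertices n c"
  then obtain i where "i < n" "x = c i"
    by (auto simp: cycle_vertices_def)
  then have "{x, c (Suc i mod n)} \<in> E"
    using assms(2) by (auto simp: cycle_edges_def)
  then show "x \<in> V"
    using simple_graph_edgeD[OF assms(1)] by blast
qed

lemma odd_cycle_not_colourable:
  assumes "cycle_edges (2 * m + 1) c \<subseteq> E" "cycle_vertices (2 * m + 1) c \<subseteq> W"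
  shows "\<not> colourable E W 2"
proof
  assume "colourable E W 2"
  then obtain f :: "'a \<Rightarrow> nat" where f: "\<forall>v\<in>W. f v < 2" "\<forall>u\<in>W. \<forall>v\<in>W. {u, v} \<in> E \<longrightarrow> f u \<noteq> f v"
    unfolding colourable_def by blast
  have on_cycle: "c i \<in> W" if "i < 2 * m + 1" for i
    using assms(2) that by (auto simp: cycle_vertices_def)
  have edge: "f (c i) \<noteq> f (c (Suc i mod (2 * m + 1)))" "f (c i) < 2" if "i \<le> 2 * m" for i
  proof -
    have i: "i < 2 * m + 1" "Suc i mod (2 * m + 1) < 2 * m + 1"
      using that by simp_all
    then have "{c i, c (Suc i mod (2 * m + 1))} \<in> E"
      using assms(1) unfolding cycle_edges_def by blast
    then show "f (c i) \<noteq> f (c (Suc i mod (2 * m + 1)))" "f (c i) < 2"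
      using f on_cycle[OF i(1)] on_cycle[OF i(2)] by blast+
  qed
  have alternate: "f (c i) = (f (c 0) + i) mod 2" if "i \<le> 2 * m" for i
    using that
  proof (induction i)
    case (Suc i)
    then have "f (c i) = (f (c 0) + i) mod 2"
      by simp
    moreover have "f (c i) \<noteq> f (c (Suc i))" "f (c (Suc i)) < 2"
      using edge[of i] edge[of "Suc i"] Suc.prems by auto
    ultimately show ?case
      by presburger
  qed (use edge in simp)
  have "f (c (2 * m)) = f (c 0)"
    using alternate[of "2 * m"] edge(2)[of 0] by simp
  moreover have "Suc (2 * m) mod (2 * m + 1) = 0"
    by simp
  ultimately show False
    using edge(1)[of "2 * m"] by simp
qed

lemma odd_cycle_colourable:
  assumes "1 \<le> m" "inj_on c {..<2 * m + 1}"
  shows "colourable (cycle_edges (2 * m + 1) c) (cycle_vertices (2 * m + 1) c) 3"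
proof -
  define n where "n = 2 * m + 1"
  define colour where "colour i = (if i = 2 * m then 2 else i mod 2)" for i :: nat
  define f where "f x = colour (inv_into {..<n} c x)" for x
  have f: "f (c i) = colour i" if "i < n" for i
    using assms(2) that by (simp add: f_def n_def inv_into_f_f)
  have "\<forall>v\<in>cycle_vertices n c. f v < 3"
    using f by (auto simp: cycle_vertices_def colour_def)
  moreover have "f u \<noteq> f v" if uv: "{u, v} \<in> cycle_edges n c" for u v
  proof -
    obtain i where i: "i < n" "{u, v} = {c i, c (Suc i mod n)}"
      using uv unfolding cycle_edges_def by blast
    have "colour i \<noteq> colour (Suc i mod n)"
      using assms(1) i(1) by (cases "i = 2 * m") (auto simp: colour_def n_def mod_Suc)
    with i f show ?thesis
      by (auto simp: doubleton_eq_iff)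
  qed
  ultimately show ?thesis
    unfolding colourable_def n_def by blast
qed

lemma edges_within_cycle:
  assumes "simple_graph V E" "inj_on c {..<n}" "3 \<le> n" "cycle_edges n c \<subseteq> E"
  shows "n \<le> card (edges_within E (cycle_vertices n c))"
    and "card (edges_within E (cycle_vertices n c)) = n \<Longrightarrow>
      edges_within E (cycle_vertices n c) = cycle_edges n c"
proof -
  have sub: "cycle_edges n c \<subseteq> edges_within E (cycle_vertices n c)"
    using assms(4) by (auto simp: edges_within_def cycle_edges_def cycle_vertices_def)
  have fin: "finite (edges_within E (cycle_vertices n c))"
    using simple_graph_finite_edges[OF assms(1)] by (simp add: edges_within_def)
  show "n \<le> card (edges_within E (cycle_vertices n c))"
    using card_mono[OF fin sub] card_cycle_edges[OF assms(2,3)] by simp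
  show "card (edges_within E (cycle_vertices n c)) = n \<Longrightarrow>
      edges_within E (cycle_vertices n c) = cycle_edges n c"
    using card_subset_eq[OF fin sub] card_cycle_edges[OF assms(2,3)] by simp
qed

section \<open>The chromatic core\<close>

definition underlying_graph :: "'a set \<Rightarrow> 'a set set \<Rightarrow> bool" where
  "underlying_graph W F \<longleftrightarrow>
     (finite W \<and> W \<noteq> {} \<and> F = complete_edges W) \<or>
     (\<exists>m c. 1 \<le> m \<and> inj_on c {..<2 * m + 1} \<and>
        W = cycle_vertices (2 * m + 1) c \<and> F = cycle_edges (2 * m + 1) c)"

lemma type_A_or_type_B_if_attach_trees:
  assumes "connected_graph V E" "underlying_graph W F" "attach_trees W F V E"
  shows "type_A V E \<or> type_B V E"
  using assms unfolding underlying_graph_def type_A_def type_B_def by blast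

lemma dense_subgraph_arith:
  fixes h e j :: nat
  assumes "3 \<le> j" "j + 1 \<le> h" "j * h \<le> 2 * e"
  shows "h + (j + 1) * j div 2 \<le> e + (j + 1)"
    and "h + (j + 1) * j div 2 = e + (j + 1) \<Longrightarrow> h = j + 1"
proof -
  obtain d where h: "h = j + 1 + d"
    using assms(2) le_Suc_ex by blast
  have "2 * ((j + 1) * j div 2) = (j + 1) * j"
    by simp
  moreover have "j * h = (j + 1) * j + j * d"
    by (simp add: h algebra_simps)
  moreover have "3 * d \<le> j * d"
    using assms(1) by simp
  ultimately show "h + (j + 1) * j div 2 \<le> e + (j + 1)"
    and "h + (j + 1) * j div 2 = e + (j + 1) \<Longrightarrow> h = j + 1"
    using assms(3) h by linarith+
qed

definition chromatic_core :: "'a set set \<Rightarrow> nat \<Rightarrow> 'a set \<Rightarrow> bool" where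
  "chromatic_core E k W \<longleftrightarrow> W \<noteq> {} \<and>
     card W + k * (k - 1) div 2 \<le> card (edges_within E W) + k \<and>
     (card W + k * (k - 1) div 2 = card (edges_within E W) + k \<longrightarrow>
        underlying_graph W (edges_within E W))"

lemma chromatic_core_clique:
  assumes "simple_graph V E" "finite K" "K \<noteq> {}" "complete_edges K \<subseteq> E"
  shows "chromatic_core E (card K) K"
  using assms edges_within_clique[OF assms(1,4)] card_complete_edges[OF assms(2)]
  by (simp add: chromatic_core_def underlying_graph_def)

lemma chromatic_core_odd_cycle:
  assumes "simple_graph V E" "connected_graph V E" "\<not> colourable E V 2"
  obtains W where "W \<subseteq> V" "chromatic_core E 3 W"
proof -
  obtain l u where "odd l" "(adj E ^^ l) u u"
    using colourable_2_if_no_odd_closed_walk[OF assms(2)] assms(3) by blast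
  then obtain m c where cycle: "1 \<le> m" "inj_on c {..<2 * m + 1}" "cycle_edges (2 * m + 1) c \<subseteq> E"
    using odd_cycle_if_odd_closed_walk[OF assms(1)] by blast
  define W where "W = cycle_vertices (2 * m + 1) c"
  have "card W = 2 * m + 1"
    using cycle(2) by (simp add: W_def cycle_vertices_def card_image)
  moreover have "2 * m + 1 \<le> card (edges_within E W)"
    "card (edges_within E W) = 2 * m + 1 \<Longrightarrow> edges_within E W = cycle_edges (2 * m + 1) c"
    using edges_within_cycle[OF assms(1) cycle(2) _ cycle(3)] cycle(1) by (simp_all add: W_def)
  moreover have "underlying_graph W (cycle_edges (2 * m + 1) c)"
    unfolding underlying_graph_def W_def using cycle(1,2) by blast
  ultimately have "chromatic_core E 3 W"
    by (auto simp: chromatic_core_def)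
  moreover have "W \<subseteq> V"
    using cycle_vertices_subset[OF assms(1) cycle(3)] by (simp add: W_def)
  ultimately show ?thesis
    using that by blast
qed

lemma chromatic_core_critical:
  assumes "simple_graph V E" "\<not> colourable E V j" "3 \<le> j"
  obtains W where "W \<subseteq> V" "chromatic_core E (j + 1) W"
proof -
  obtain W where W: "W \<subseteq> V" "j + 1 \<le> card W" "j * card W \<le> 2 * card (edges_within E W)"
    using minimal_non_colourable_subgraph[OF assms(1,2)] by blast
  have fin: "finite W"
    using W(1) assms(1) finite_subset simple_graph_finite_vertices by blast
  have bound: "card W + (j + 1) * j div 2 \<le> card (edges_within E W) + (j + 1)"
    and tight: "card W + (j + 1) * j div 2 = card (edges_within E W) + (j + 1) \<Longrightarrow> card W = j + 1"
    using dense_subgraph_arith[OF assms(3) W(2,3)] by simp_all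
  have "edges_within E W = complete_edges W"
    if "card W + (j + 1) * j div 2 = card (edges_within E W) + (j + 1)"
  proof -
    have "card (edges_within E W) = card (complete_edges W)"
      using tight[OF that] that card_complete_edges[OF fin] by simp
    then show ?thesis
      using card_subset_eq[OF finite_complete_edges[OF fin] edges_within_subset_complete_edges[OF assms(1)]]
      by simp
  qed
  then have "chromatic_core E (j + 1) W"
    using bound fin W(2) by (auto simp: chromatic_core_def underlying_graph_def)
  with W(1) that show ?thesis
    by blast
qed

lemma exists_chromatic_core:
  assumes "simple_graph V E" "connected_graph V E"
  obtains W where "W \<subseteq> V" "chromatic_core E (chromatic_number V E) W"
proof -
  define k where "k = chromatic_number V E"
  have "V \<noteq> {}"
    using assms(2) by (simp add: connected_graph_def)
  then have "\<not> colourable E V 0"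
    by (auto simp: colourable_def)
  then have "1 \<le> k"
    using chromatic_number_le_iff[OF assms(1), of 0] by (simp add: k_def)
  have not_colourable: "\<not> colourable E V (k - 1)"
    using chromatic_number_le_iff[OF assms(1), of "k - 1"] \<open>1 \<le> k\<close> unfolding k_def by linarith
  consider "k = 1" | "k = 2" | "k = 3" | "4 \<le> k"
    using \<open>1 \<le> k\<close> by linarith
  then have "\<exists>W\<subseteq>V. chromatic_core E k W"
  proof cases
    case 1
    with \<open>V \<noteq> {}\<close> obtain v where "v \<in> V"
      by blast
    moreover have "complete_edges {v} = {}"
      by (auto simp: complete_edges_def)
    ultimately show ?thesis
      using chromatic_core_clique[OF assms(1), of "{v}"] 1 by auto
  next
    case 2
    have "E \<noteq> {}"
    proof
      assume "E = {}"
      then have "colourable E V 1"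
        by (auto simp: colourable_def)
      with not_colourable 2 show False
        by simp
    qed
    then obtain a b where ab: "a \<in> V" "b \<in> V" "a \<noteq> b" "{a, b} \<in> E"
      by (metis all_not_in_conv assms(1) simple_graph_edgeE)
    moreover have "complete_edges {a, b} = {{a, b}}"
      using ab(3) by (auto simp: complete_edges_def doubleton_eq_iff)
    ultimately show ?thesis
      using chromatic_core_clique[OF assms(1), of "{a, b}"] 2 by (auto simp: numeral_2_eq_2)
  next
    case 3
    then show ?thesis
      using chromatic_core_odd_cycle[OF assms] not_colourable by auto
  next
    case 4
    then have "3 \<le> k - 1" "k - 1 + 1 = k"
      by auto
    then show ?thesis
      using chromatic_core_critical[OF assms(1) not_colourable] by metis
  qed
  then show ?thesis
    using that by (auto simp: k_def)
qed

section \<open>Graphs of type A and B\<close>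

lemma chromatic_number_eq_clique:
  assumes "simple_graph V E" "K \<subseteq> V" "finite K" "complete_edges K \<subseteq> E" "colourable E V (card K)"
  shows "chromatic_number V E = card K"
proof -
  have "colourable E V (chromatic_number V E)"
    using chromatic_number_le_iff[OF assms(1)] by blast
  then have "card K \<le> chromatic_number V E"
    using clique_card_le_colours assms(2-4) by blast
  moreover have "chromatic_number V E \<le> card K"
    using chromatic_number_le_iff[OF assms(1)] assms(5) by blast
  ultimately show ?thesis
    by simp
qed

lemma chromatic_edge_bound:
  assumes "simple_graph V E" "connected_graph V E" "k = chromatic_number V E"
  shows "card V + k * (k - 1) div 2 \<le> card E + k"
    and "card V + k * (k - 1) div 2 = card E + k \<Longrightarrow> type_A V E \<or> type_B V E"
proof -
  obtain W where "W \<subseteq> V" "chromatic_core E k W"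
    using exists_chromatic_core[OF assms(1,2)] assms(3) by blast
  then have W: "W \<subseteq> V" "W \<noteq> {}"
    "card W + k * (k - 1) div 2 \<le> card (edges_within E W) + k"
    "card W + k * (k - 1) div 2 = card (edges_within E W) + k \<Longrightarrow> underlying_graph W (edges_within E W)"
    by (auto simp: chromatic_core_def)
  have trees: "card (V - W) \<le> card (E - edges_within E W)"
    "card (E - edges_within E W) = card (V - W) \<Longrightarrow> attach_trees W (edges_within E W) V E"
    using card_edges_outside[OF assms(1,2) W(1,2)] by auto
  have card_V: "card V = card W + card (V - W)"
    using card_Int_Diff[OF simple_graph_finite_vertices[OF assms(1)], of W] W(1) by (simp add: Int_absorb1)
  moreover have card_E: "card E = card (edges_within E W) + card (E - edges_within E W)"
    using card_Int_Diff[OF simple_graph_finite_edges[OF assms(1)], of "edges_within E W"]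
      Int_absorb1[of "edges_within E W" E] by (auto simp: edges_within_def)
  ultimately show "card V + k * (k - 1) div 2 \<le> card E + k"
    using W(3) trees(1) by linarith
  assume "card V + k * (k - 1) div 2 = card E + k"
  with card_V card_E W(3) trees(1)
  have "card W + k * (k - 1) div 2 = card (edges_within E W) + k"
    and "card (E - edges_within E W) = card (V - W)"
    by linarith+
  then show "type_A V E \<or> type_B V E"
    using W(4) trees(2) type_A_or_type_B_if_attach_trees[OF assms(2)] by blast
qed

lemma tight_if_type_A:
  assumes "simple_graph V E" "type_A V E"
  shows "card V + chromatic_number V E * (chromatic_number V E - 1) div 2 = card E + chromatic_number V E"
proof -
  obtain K where K: "finite K" "K \<noteq> {}" "attach_trees K (complete_edges K) V E"
    using assms(2) unfolding type_A_def by blast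
  have inside: "\<forall>e\<in>complete_edges K. e \<subseteq> K"
    by (auto simp: complete_edges_def)
  have sub: "K \<subseteq> V" "complete_edges K \<subseteq> E"
    using attach_trees_subset[OF K(3)] by auto
  have count: "card V + card K * (card K - 1) div 2 = card E + card K"
    using attach_trees_card[OF K(3) inside] card_complete_edges[OF K(1)]
      simple_graph_finite_vertices[OF assms(1)] simple_graph_finite_edges[OF assms(1)] by simp
  have "1 \<le> card K"
    using K(1,2) by (simp add: Suc_le_eq card_gt_0_iff)
  have colour_K: "colourable (complete_edges K) K (card K)"
    using colourable_card[OF simple_graph_complete_edges[OF K(1)]] by blast
  consider "E = {}" | "E \<noteq> {}" "2 \<le> card K" | "E \<noteq> {}" "card K = 1"
    using \<open>1 \<le> card K\<close> by linarith
  then show ?thesis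
  proof cases
    case 1
    then have "colourable E V (card K)"
      using \<open>1 \<le> card K\<close> unfolding colourable_def by (intro exI[of _ "\<lambda>_. 0"]) auto
    with count show ?thesis
      using chromatic_number_eq_clique[OF assms(1) sub(1) K(1) sub(2)] by simp
  next
    case 2
    then have "colourable E V (card K)"
      using attach_trees_colourable[OF K(3) inside _ colour_K] by blast
    with count show ?thesis
      using chromatic_number_eq_clique[OF assms(1) sub(1) K(1) sub(2)] by simp
  next
    case 3
    obtain a b where ab: "a \<in> V" "b \<in> V" "a \<noteq> b" "{a, b} \<in> E"
      using 3(1) by (metis all_not_in_conv assms(1) simple_graph_edgeE)
    have "complete_edges {a, b} \<subseteq> E"
      using ab by (auto simp: complete_edges_def doubleton_eq_iff insert_commute)
    moreover have "colourable E V 2"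
      using attach_trees_colourable[OF K(3) inside _ colourable_mono[OF colour_K]] 3(2) by simp
    then have "colourable E V (card {a, b})"
      using ab(3) by (simp add: numeral_2_eq_2)
    ultimately have "chromatic_number V E = 2"
      using chromatic_number_eq_clique[OF assms(1), of "{a, b}"] ab by simp
    with count 3(2) show ?thesis
      by simp
  qed
qed

lemma tight_if_type_B:
  assumes "simple_graph V E" "type_B V E"
  shows "card V + chromatic_number V E * (chromatic_number V E - 1) div 2 = card E + chromatic_number V E"
proof -
  obtain m c where B: "1 \<le> m" "inj_on c {..<2 * m + 1}"
    "attach_trees (cycle_vertices (2 * m + 1) c) (cycle_edges (2 * m + 1) c) V E"
    using assms(2) unfolding type_B_def by auto
  have inside: "\<forall>e\<in>cycle_edges (2 * m + 1) c. e \<subseteq> cycle_vertices (2 * m + 1) c"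
    by (auto simp: cycle_edges_def cycle_vertices_def)
  have sub: "cycle_vertices (2 * m + 1) c \<subseteq> V" "cycle_edges (2 * m + 1) c \<subseteq> E"
    using attach_trees_subset[OF B(3)] by auto
  have "card V = card E"
    using attach_trees_card[OF B(3) inside] card_cycle_edges[OF B(2)] B(1,2)
      simple_graph_finite_vertices[OF assms(1)] simple_graph_finite_edges[OF assms(1)]
    by (simp add: cycle_vertices_def card_image)
  moreover have "chromatic_number V E = 3"
    using chromatic_number_eqI[OF assms(1)] odd_cycle_not_colourable[OF sub(2,1)]
      attach_trees_colourable[OF B(3) inside _ odd_cycle_colourable[OF B(1,2)]] by simp
  ultimately show ?thesis
    by simp
qed

lemma int_identity_iff:
  fixes k a b :: nat
  shows "(int k * (int k - 1)) div 2 + int a - int k = int b \<longleftrightarrow> a + k * (k - 1) div 2 = b + k"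
proof -
  have product: "int k * (int k - 1) = int (k * (k - 1))"
    by (cases k) (auto simp: algebra_simps)
  have "(int k * (int k - 1)) div 2 = int (k * (k - 1) div 2)"
    unfolding product zdiv_int by simp
  then show ?thesis
    by linarith
qed

theorem theorem1:
  fixes V :: "'a set" and E :: "'a set set"
  assumes "simple_graph V E" and "connected_graph V E"
  shows "(int (chromatic_number V E) * (int (chromatic_number V E) - 1)) div 2
           + int (card V) - int (chromatic_number V E) = int (card E)
         \<longleftrightarrow> type_A V E \<or> type_B V E"
  unfolding int_identity_iff
  using chromatic_edge_bound(2)[OF assms] tight_if_type_A[OF assms(1)] tight_if_type_B[OF assms(1)]
  by blast

end
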